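(* Let $I$ and $J$ be finite sets, let $g\in\mathbb{R}^J$, and for each $i\in I$ let $u_i:\mathbb{R}^J\to\mathbb{R}\cup\{-\infty\}$ be upper semicontinuous and concave with $u_i(x_i+rg)>u_i(x_i)$ for all $x_i\in\mathrm{dom}\,u_i$ and $r>0$. Let $x^0\in\mathbb{R}^{I\times J}$, define $D_i(x_i):=\sup\{r\in\mathbb{R}\mid u_i(x^0_i+x_i-rg)\ge u_i(x^0_i)\}$, and assume there is $\varepsilon>0$ such that for every $z\in\mathbb{R}^J$ with $|z|\le\varepsilon$ the optimal value of the problem "maximize $\sum_{i\in I}D_i(x_i)$ over $x\in\mathbb{R}^{I\times J}$ subject to $\sum_{i\in I}x_i=z$" is finite. Then the following are equivalent: (1) $x^0$ is a double auction equilibrium; (2) there is $p\in\mathbb{R}^J$ with $p\in\partial D_i(0)$ for all $i\in I$; (3) there is $p\in\mathbb{R}^J$ with $g\cdot p=1$ such that, for all $i\in I$, $p\cdot w_i\ge p\cdot x^0_i$ for all $w_i\in\mathbb{R}^J$ with $u_i(w_i)\ge u_i(x^0_i)$.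
   Context: $\mathrm{dom}\,u_i=\{x\mid u_i(x)>-\infty\}$. $\partial D_i(\bar x_i)$ denotes the superdifferential of the concave function $D_i$ at $\bar x_i$: the set of $p\in\mathbb{R}^J$ with $D_i(x_i)\le D_i(\bar x_i)+p\cdot(x_i-\bar x_i)$ for all $x_i\in\mathbb{R}^J$. $CS(x^0)$ is the optimal value of the problem: maximize $\sum_{i\in I}D_i(x_i)$ over $x\in\mathbb{R}^{I\times J}$ subject to $\sum_{i\in I}x_i=0$; $x^0$ is a double auction equilibrium if $CS(x^0)=0$. *)

theory Defs
  imports "HOL-Analysis.Analysis"
begin

text \<open>Vectors in R^J are modelled as real^'j for a finite type 'j; allocations
x in R^(I x J) as functions 'i => real^'j for a finite type 'i. Utilities take
values in ereal and are assumed never to be +infinity.\<close>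

definition usc :: "('a::topological_space \<Rightarrow> ereal) \<Rightarrow> bool" where
  "usc u \<longleftrightarrow> (\<forall>c::ereal. closed {x. c \<le> u x})"

definition concave_ext :: "('a::real_vector \<Rightarrow> ereal) \<Rightarrow> bool" where
  "concave_ext u \<longleftrightarrow> convex {(x, r::real). ereal r \<le> u x}"

definition edom :: "('a \<Rightarrow> ereal) \<Rightarrow> 'a set" where
  "edom u = {x. u x > -\<infinity>}"

definition Dfun :: "(real^'j \<Rightarrow> ereal) \<Rightarrow> real^'j \<Rightarrow> real^'j \<Rightarrow> real^'j \<Rightarrow> ereal" where
  "Dfun ui g x0i xi = Sup (ereal ` {r::real. ui (x0i + xi - r *\<^sub>R g) \<ge> ui x0i})"

definition optval :: "('i::finite \<Rightarrow> real^'j \<Rightarrow> ereal) \<Rightarrow> real^'j \<Rightarrow> ('i \<Rightarrow> real^'j) \<Rightarrow> real^'j \<Rightarrow> ereal" where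
  "optval u g x0 z = Sup {(\<Sum>i\<in>UNIV. Dfun (u i) g (x0 i) (x i)) | x. (\<Sum>i\<in>UNIV. x i) = z}"

definition CS :: "('i::finite \<Rightarrow> real^'j \<Rightarrow> ereal) \<Rightarrow> real^'j \<Rightarrow> ('i \<Rightarrow> real^'j) \<Rightarrow> ereal" where
  "CS u g x0 = optval u g x0 0"

definition double_auction_eq :: "('i::finite \<Rightarrow> real^'j \<Rightarrow> ereal) \<Rightarrow> real^'j \<Rightarrow> ('i \<Rightarrow> real^'j) \<Rightarrow> bool" where
  "double_auction_eq u g x0 \<longleftrightarrow> CS u g x0 = 0"

definition superdiff :: "('a::real_inner \<Rightarrow> ereal) \<Rightarrow> 'a \<Rightarrow> 'a set" where
  "superdiff D xb = {p. \<forall>x. D x \<le> D xb + ereal (p \<bullet> (x - xb))}"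

end

theory Submission
  imports Defs
begin

text \<open>A trade \<open>(y, r)\<close> is acceptable to agent \<open>i\<close> if receiving \<open>y\<close> while paying \<open>r\<close>
units of the numeraire \<open>g\<close> leaves it at least as well off as at \<open>x0\<^sub>i\<close>; thus
\<open>D\<^sub>i(y)\<close> is the supremum of the \<open>r\<close> with \<open>(y, r)\<close> acceptable, and the acceptable trades
form a convex set by concavity of \<open>u\<^sub>i\<close>. Since \<open>D\<^sub>i(0) = 0\<close>, condition (2) says that the
hyperplane \<open>r = p \<bullet> y\<close> lies above all acceptable trades of all agents, and (3) is the
same condition read off at the trades \<open>(w - x0\<^sub>i, 0)\<close> and \<open>(\<plusminus>g, \<plusminus>1)\<close>. Summing over agents,
(2) bounds \<open>CS(x0)\<close> by \<open>p \<bullet> 0 = 0\<close>. Conversely, if \<open>CS(x0) = 0\<close> then the Minkowski sum of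
the sets of acceptable trades contains no point \<open>(0, t)\<close> with \<open>t > 0\<close>, and finiteness of
the optimal value near \<open>0\<close> makes its projection contain a ball around \<open>0\<close>. Separating the
origin from the strict hypograph of this sum yields a supporting hyperplane that cannot be
vertical, and its slope is the common supergradient \<open>p\<close>.\<close>

definition acceptable_trades :: "('a::real_vector \<Rightarrow> ereal) \<Rightarrow> 'a \<Rightarrow> 'a \<Rightarrow> ('a \<times> real) set" where
  "acceptable_trades ui g x0i = {(y, r). ui x0i \<le> ui (x0i + y - r *\<^sub>R g)}"

lemma convex_superlevel_concave_ext:
  assumes "concave_ext u" and "c \<noteq> \<infinity>"
  shows "convex {x. c \<le> u x}"
proof (cases c)
  case (real a)
  have "{x. c \<le> u x} = fst ` ({(x, r). ereal r \<le> u x} \<inter> {(x, r). r = a})"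
    using real by force
  moreover have "convex {(x, r::real). r = a}"
    by (rule convexI) (auto simp: algebra_simps simp flip: distrib_right)
  ultimately show ?thesis
    using assms(1) unfolding concave_ext_def
    by (metis convex_Int convex_linear_image linear_fst)
qed (use assms in auto)

lemma convex_acceptable_trades:
  assumes "concave_ext ui" and "ui x0i \<noteq> \<infinity>"
  shows "convex (acceptable_trades ui g x0i)"
proof -
  have "linear (\<lambda>(y, r). y - r *\<^sub>R g)"
    by (auto simp: linear_iff algebra_simps)
  moreover have "acceptable_trades ui g x0i
      = (\<lambda>(y, r). y - r *\<^sub>R g) -` ((\<lambda>x. x - x0i) ` {x. ui x0i \<le> ui x})"
    by (force simp: acceptable_trades_def algebra_simps)
  ultimately show ?thesis
    using convex_superlevel_concave_ext[OF assms]
    by (metis convex_linear_vimage convex_translation_subtract)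
qed

lemma nonvertical_supporting_hyperplane:
  fixes H :: "('a::euclidean_space \<times> real) set"
  assumes "convex H" and "(0, 0) \<in> H" and above: "\<And>t. (0, t) \<in> H \<Longrightarrow> t \<le> 0"
    and "e > 0" and proj: "\<And>z. norm z < e \<Longrightarrow> \<exists>t. (z, t) \<in> H"
  shows "\<exists>p. \<forall>(z, t)\<in>H. t \<le> p \<bullet> z"
proof -
  define S where "S = (\<lambda>(h, s). h - (0, s)) ` (H \<times> {0<..})"
  have "linear (\<lambda>(h::'a \<times> real, s::real). h - (0, s))"
    by (auto simp: linear_iff algebra_simps)
  then have "convex S"
    unfolding S_def using assms(1) by (intro convex_linear_image convex_Times) auto
  moreover have "0 \<notin> S"
  proof
    assume "0 \<in> S"
    then obtain z t s where "(z, t) \<in> H" "s > 0" "(z, t - s) = 0"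
      unfolding S_def by auto
    then have "(0, t) \<in> H" "t > 0"
      by (auto simp: zero_prod_def)
    then show False
      using above by fastforce
  qed
  ultimately obtain a b where ab: "(a, b) \<noteq> 0" and sep_S: "\<And>x. x \<in> S \<Longrightarrow> 0 \<le> (a, b) \<bullet> x"
    using separating_hyperplane_set_0 by (metis surj_pair)
  have sep: "0 \<le> a \<bullet> z + b * (t - s)" if "(z, t) \<in> H" "s > 0" for z t s
  proof -
    have "(z, t - s) \<in> S"
      unfolding S_def using that by (force intro: image_eqI[where x = "((z, t), s)"])
    then show ?thesis
      using sep_S by fastforce
  qed
  have "b \<le> 0"
    using sep[OF \<open>(0, 0) \<in> H\<close>, of 1] by simp
  moreover have "b \<noteq> 0"
  proof
    assume "b = 0"
    then have "a \<noteq> 0"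
      using ab by (simp add: zero_prod_def)
    define z where "z = - (e / (2 * norm a)) *\<^sub>R a"
    have "norm z < e"
      using \<open>a \<noteq> 0\<close> \<open>e > 0\<close> by (simp add: z_def)
    then obtain t where "(z, t) \<in> H"
      using proj by blast
    from sep[OF this, of 1] have "0 \<le> a \<bullet> z"
      using \<open>b = 0\<close> by simp
    moreover have "a \<bullet> z < 0"
      using \<open>a \<noteq> 0\<close> \<open>e > 0\<close> by (simp add: z_def)
    ultimately show False
      by simp
  qed
  ultimately have "b < 0"
    by simp
  have "t \<le> (- (1 / b)) *\<^sub>R a \<bullet> z" if "(z, t) \<in> H" for z t
  proof (rule dense_le)
    fix t' assume "t' < t"
    then have "0 \<le> a \<bullet> z + b * t'"
      using sep[OF that, of "t - t'"] by simp
    then show "t' \<le> (- (1 / b)) *\<^sub>R a \<bullet> z"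
      using \<open>b < 0\<close> by (simp add: field_simps)
  qed
  then show ?thesis
    by blast
qed

lemma Dfun_eq_SUP_acceptable_trades:
  "Dfun ui g x0i y = (SUP r\<in>{r. (y, r) \<in> acceptable_trades ui g x0i}. ereal r)"
  by (simp add: Dfun_def acceptable_trades_def)

lemma Dfun_ge:
  "(y, r) \<in> acceptable_trades ui g x0i \<Longrightarrow> ereal r \<le> Dfun ui g x0i y"
  unfolding Dfun_eq_SUP_acceptable_trades by (auto intro: SUP_upper)

lemma Dfun_le:
  "(\<And>r. (y, r) \<in> acceptable_trades ui g x0i \<Longrightarrow> r \<le> c) \<Longrightarrow> Dfun ui g x0i y \<le> ereal c"
  unfolding Dfun_eq_SUP_acceptable_trades by (auto intro: SUP_least)

lemma Dfun_neq_MInfty_iff: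
  "Dfun ui g x0i y \<noteq> -\<infinity> \<longleftrightarrow> (\<exists>r. (y, r) \<in> acceptable_trades ui g x0i)"
  unfolding Dfun_eq_SUP_acceptable_trades by (auto simp: Sup_eq_MInfty)

lemma Dfun_PInfty_if_endowment_MInfty:
  "ui x0i = -\<infinity> \<Longrightarrow> Dfun ui g x0i y = \<infinity>"
  by (rule ereal_top, rule Dfun_ge) (simp add: acceptable_trades_def)

lemma Dfun_zero:
  assumes mono: "\<And>x r. x \<in> edom ui \<Longrightarrow> r > 0 \<Longrightarrow> ui x < ui (x + r *\<^sub>R g)"
    and "ui x0i \<noteq> -\<infinity>"
  shows "Dfun ui g x0i 0 = 0"
proof (rule antisym)
  show "0 \<le> Dfun ui g x0i 0"
    using Dfun_ge[of 0 0 ui g x0i] by (simp add: acceptable_trades_def zero_ereal_def)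
  have "r \<le> 0" if "(0, r) \<in> acceptable_trades ui g x0i" for r
  proof (rule ccontr)
    assume "\<not> r \<le> 0"
    let ?w = "x0i - r *\<^sub>R g"
    have "ui x0i \<le> ui ?w"
      using that by (simp add: acceptable_trades_def)
    then have "?w \<in> edom ui"
      using \<open>ui x0i \<noteq> -\<infinity>\<close> by (auto simp: edom_def)
    from mono[OF this, of r] \<open>\<not> r \<le> 0\<close> have "ui ?w < ui x0i"
      by simp
    with \<open>ui x0i \<le> ui ?w\<close> show False
      by simp
  qed
  then show "Dfun ui g x0i 0 \<le> 0"
    using Dfun_le[of 0 ui g x0i 0] by (simp add: zero_ereal_def)
qed

lemma Dfun_le_inner_iff:
  "(\<forall>y. Dfun ui g x0i y \<le> ereal (p \<bullet> y))
    \<longleftrightarrow> g \<bullet> p = 1 \<and> (\<forall>w. ui x0i \<le> ui w \<longrightarrow> p \<bullet> x0i \<le> p \<bullet> w)"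
proof safe
  assume bound: "\<forall>y. Dfun ui g x0i y \<le> ereal (p \<bullet> y)"
  have acceptable_le: "r \<le> p \<bullet> y" if "(y, r) \<in> acceptable_trades ui g x0i" for y r
    using Dfun_ge[OF that] bound order_trans by fastforce
  have "1 \<le> p \<bullet> g" "-1 \<le> p \<bullet> (- g)"
    by (rule acceptable_le; simp add: acceptable_trades_def)+
  then show "g \<bullet> p = 1"
    by (simp add: inner_commute)
  show "p \<bullet> x0i \<le> p \<bullet> w" if "ui x0i \<le> ui w" for w
    using acceptable_le[of "w - x0i" 0] that by (simp add: acceptable_trades_def inner_diff_right)
next
  fix y
  assume "g \<bullet> p = 1" and supported: "\<forall>w. ui x0i \<le> ui w \<longrightarrow> p \<bullet> x0i \<le> p \<bullet> w"
  show "Dfun ui g x0i y \<le> ereal (p \<bullet> y)"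
  proof (rule Dfun_le)
    fix r
    assume "(y, r) \<in> acceptable_trades ui g x0i"
    then have "p \<bullet> x0i \<le> p \<bullet> (x0i + y - r *\<^sub>R g)"
      using supported by (simp add: acceptable_trades_def)
    then show "r \<le> p \<bullet> y"
      using \<open>g \<bullet> p = 1\<close> by (simp add: inner_diff_right inner_add_right inner_commute)
  qed
qed

lemma sum_Dfun_le_optval:
  "(\<Sum>i\<in>UNIV. Dfun (u i) g (x0 i) (x i)) \<le> optval u g x0 (\<Sum>i\<in>UNIV. x i)"
  unfolding optval_def by (rule Sup_upper) blast

lemma optval_ge_acceptable:
  assumes "\<And>i. (x i, r i) \<in> acceptable_trades (u i) g (x0 i)"
  shows "ereal (\<Sum>i\<in>UNIV. r i) \<le> optval u g x0 (\<Sum>i\<in>UNIV. x i)"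
proof -
  have "ereal (\<Sum>i\<in>UNIV. r i) = (\<Sum>i\<in>UNIV. ereal (r i))"
    by simp
  also have "\<dots> \<le> (\<Sum>i\<in>UNIV. Dfun (u i) g (x0 i) (x i))"
    by (intro sum_mono Dfun_ge assms)
  also have "\<dots> \<le> optval u g x0 (\<Sum>i\<in>UNIV. x i)"
    by (rule sum_Dfun_le_optval)
  finally show ?thesis .
qed

lemma optval_zero_nonneg: "0 \<le> optval u g x0 0"
  using optval_ge_acceptable[where x = "\<lambda>_. 0" and r = "\<lambda>_. 0" and u = u and g = g and x0 = x0]
  by (simp add: acceptable_trades_def zero_ereal_def)

lemma optval_le_inner:
  fixes u :: "'i::finite \<Rightarrow> real^'j \<Rightarrow> ereal"
  assumes "\<And>i y. Dfun (u i) g (x0 i) y \<le> ereal (p \<bullet> y)"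
  shows "optval u g x0 z \<le> ereal (p \<bullet> z)"
  unfolding optval_def
proof (rule Sup_least, clarify)
  fix x :: "'i \<Rightarrow> real^'j"
  have "(\<Sum>i\<in>UNIV. Dfun (u i) g (x0 i) (x i)) \<le> (\<Sum>i\<in>UNIV. ereal (p \<bullet> x i))"
    by (intro sum_mono assms)
  then show "(\<Sum>i\<in>UNIV. Dfun (u i) g (x0 i) (x i)) \<le> ereal (p \<bullet> (\<Sum>i\<in>UNIV. x i))"
    by (simp add: inner_sum_right)
qed

lemma endowment_utility_neq_MInfty:
  assumes "optval u g x0 0 \<noteq> \<infinity>"
  shows "u i (x0 i) \<noteq> -\<infinity>"
proof
  assume "u i (x0 i) = -\<infinity>"
  then have "(\<Sum>k\<in>UNIV. Dfun (u k) g (x0 k) 0) = \<infinity>"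
    by (auto simp: sum_Pinfty intro: Dfun_PInfty_if_endowment_MInfty)
  with sum_Dfun_le_optval[of u g x0 "\<lambda>_. 0"] assms show False
    by (simp add: top_unique flip: top_ereal_def)
qed

lemma optval_finite_imp_acceptable:
  assumes "\<bar>optval u g x0 z\<bar> \<noteq> \<infinity>"
  shows "\<exists>x r. (\<Sum>i\<in>UNIV. x i) = z \<and> (\<forall>i. (x i, r i) \<in> acceptable_trades (u i) g (x0 i))"
proof -
  define X where "X = {(\<Sum>i\<in>UNIV. Dfun (u i) g (x0 i) (x i)) | x. (\<Sum>i\<in>UNIV. x i) = z}"
  have "Sup X \<noteq> -\<infinity>" "Sup X \<noteq> \<infinity>"
    using assms by (auto simp: optval_def X_def)
  then obtain s where "s \<in> X" "s \<noteq> -\<infinity>" "s \<noteq> \<infinity>"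
    using Sup_eq_MInfty[of X] Sup_eq_PInfty[of X] by blast
  then obtain x where "(\<Sum>i\<in>UNIV. x i) = z" and "\<bar>\<Sum>i\<in>UNIV. Dfun (u i) g (x0 i) (x i)\<bar> \<noteq> \<infinity>"
    unfolding X_def by force
  then have "\<bar>Dfun (u i) g (x0 i) (x i)\<bar> \<noteq> \<infinity>" for i
    by (simp add: sum_Inf)
  then have "Dfun (u i) g (x0 i) (x i) \<noteq> -\<infinity>" for i
    by (metis abs_ereal_uminus abs_ereal.simps(2))
  then have "\<forall>i. \<exists>r. (x i, r) \<in> acceptable_trades (u i) g (x0 i)"
    by (simp add: Dfun_neq_MInfty_iff)
  then show ?thesis
    using \<open>(\<Sum>i\<in>UNIV. x i) = z\<close> by (metis choice)
qed

lemma common_supergradient_if_optval_nonpos: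
  fixes u :: "'i::finite \<Rightarrow> real^'j::finite \<Rightarrow> ereal"
  assumes "\<And>i. concave_ext (u i)" and "\<And>i. u i (x0 i) \<noteq> \<infinity>"
    and "optval u g x0 0 \<le> 0"
    and "e > 0" and finite_near_0: "\<And>z. norm z < e \<Longrightarrow> \<bar>optval u g x0 z\<bar> \<noteq> \<infinity>"
  shows "\<exists>p. \<forall>i y. Dfun (u i) g (x0 i) y \<le> ereal (p \<bullet> y)"
proof -
  define H where "H = (\<Sum>i\<in>UNIV. acceptable_trades (u i) g (x0 i))"
  have sum_pairs: "(\<Sum>i\<in>UNIV. (x i, r i)) = (\<Sum>i\<in>UNIV. x i, \<Sum>i\<in>UNIV. r i)"
    for x :: "'i \<Rightarrow> real^'j" and r :: "'i \<Rightarrow> real"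
    by (simp add: prod_eq_iff fst_sum snd_sum)
  have in_H: "(\<Sum>i\<in>UNIV. x i, \<Sum>i\<in>UNIV. r i) \<in> H"
    if "\<And>i. (x i, r i) \<in> acceptable_trades (u i) g (x0 i)" for x r
    unfolding H_def set_sum_alt[OF finite] sum_pairs[symmetric]
    by (rule CollectI, rule exI[of _ "\<lambda>i. (x i, r i)"]) (simp add: that)
  have convex_H: "convex H"
    unfolding H_def by (intro convex_set_sum convex_acceptable_trades assms)
  have zero_in_H: "(0, 0) \<in> H"
    using in_H[of "\<lambda>_. 0" "\<lambda>_. 0"] by (simp add: acceptable_trades_def)
  have above_zero: "t \<le> 0" if "(0, t) \<in> H" for t
  proof -
    obtain h where h: "\<And>i. h i \<in> acceptable_trades (u i) g (x0 i)" and "(0, t) = (\<Sum>i\<in>UNIV. h i)"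
      using \<open>(0, t) \<in> H\<close> unfolding H_def set_sum_alt[OF finite] by blast
    then have "(\<Sum>i\<in>UNIV. fst (h i)) = 0 \<and> (\<Sum>i\<in>UNIV. snd (h i)) = t"
      using sum_pairs[of "\<lambda>i. fst (h i)" "\<lambda>i. snd (h i)"] by simp
    with optval_ge_acceptable[of "\<lambda>i. fst (h i)" "\<lambda>i. snd (h i)"] h
    have "ereal t \<le> optval u g x0 0"
      by simp
    also note \<open>optval u g x0 0 \<le> 0\<close>
    finally show ?thesis
      by (simp add: zero_ereal_def)
  qed
  have projection_covers_ball: "\<exists>t. (z, t) \<in> H" if z_small: "norm z < e" for z
  proof -
    obtain x r where "(\<Sum>i\<in>UNIV. x i) = z" "\<And>i. (x i, r i) \<in> acceptable_trades (u i) g (x0 i)"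
      using optval_finite_imp_acceptable[OF finite_near_0[OF z_small]] by blast
    then show ?thesis
      using in_H by blast
  qed
  obtain p where p: "\<forall>(z, t)\<in>H. t \<le> p \<bullet> z"
    using nonvertical_supporting_hyperplane[OF convex_H zero_in_H above_zero \<open>e > 0\<close> projection_covers_ball]
    by blast
  have "r \<le> p \<bullet> y" if "(y, r) \<in> acceptable_trades (u i) g (x0 i)" for i y r
  proof -
    have "(\<Sum>k\<in>UNIV. if k = i then y else 0, \<Sum>k\<in>UNIV. if k = i then r else 0) \<in> H"
      by (rule in_H) (use that in \<open>auto simp: acceptable_trades_def\<close>)
    then show ?thesis
      using p by fastforce
  qed
  then show ?thesis
    by (blast intro: Dfun_le)
qed

lemma double_auction_eq_iff_common_bound:
  fixes u :: "'i::finite \<Rightarrow> real^'j::finite \<Rightarrow> ereal"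
  assumes "\<And>i. concave_ext (u i)" and "\<And>i. u i (x0 i) \<noteq> \<infinity>"
    and "e > 0" and "\<And>z. norm z < e \<Longrightarrow> \<bar>optval u g x0 z\<bar> \<noteq> \<infinity>"
  shows "double_auction_eq u g x0 \<longleftrightarrow> (\<exists>p. \<forall>i y. Dfun (u i) g (x0 i) y \<le> ereal (p \<bullet> y))"
proof
  assume "double_auction_eq u g x0"
  then have "optval u g x0 0 \<le> 0"
    by (simp add: double_auction_eq_def CS_def)
  then show "\<exists>p. \<forall>i y. Dfun (u i) g (x0 i) y \<le> ereal (p \<bullet> y)"
    by (intro common_supergradient_if_optval_nonpos[where e = e] assms)
next
  assume "\<exists>p. \<forall>i y. Dfun (u i) g (x0 i) y \<le> ereal (p \<bullet> y)"
  then obtain p where "\<And>i y. Dfun (u i) g (x0 i) y \<le> ereal (p \<bullet> y)"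
    by blast
  then have "optval u g x0 0 \<le> ereal (p \<bullet> 0)"
    by (rule optval_le_inner)
  then show "double_auction_eq u g x0"
    unfolding double_auction_eq_def CS_def
    using optval_zero_nonneg[of u g x0] by (metis antisym inner_zero_right zero_ereal_def)
qed

theorem lemma5p3:
  fixes u :: "'i::finite \<Rightarrow> real^'j::finite \<Rightarrow> ereal"
    and g :: "real^'j"
    and x0 :: "'i \<Rightarrow> real^'j"
  assumes no_pinf: "\<And>i x. u i x \<noteq> \<infinity>"
    and usc: "\<And>i. usc (u i)"
    and concave: "\<And>i. concave_ext (u i)"
    and mono: "\<And>i xi r. xi \<in> edom (u i) \<Longrightarrow> r > 0 \<Longrightarrow> u i (xi + r *\<^sub>R g) > u i xi"
    and finite_val: "\<exists>\<epsilon>>0. \<forall>z. norm z \<le> \<epsilon> \<longrightarrow> \<bar>optval u g x0 z\<bar> \<noteq> \<infinity>"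
  shows "(double_auction_eq u g x0
            \<longleftrightarrow> (\<exists>p. \<forall>i. p \<in> superdiff (Dfun (u i) g (x0 i)) 0))
       \<and> ((\<exists>p. \<forall>i. p \<in> superdiff (Dfun (u i) g (x0 i)) 0)
            \<longleftrightarrow> (\<exists>p. g \<bullet> p = 1 \<and>
                   (\<forall>i w. u i w \<ge> u i (x0 i) \<longrightarrow> p \<bullet> w \<ge> p \<bullet> x0 i)))"
proof -
  obtain e where "e > 0" and finite_near_0: "\<And>z. norm z \<le> e \<Longrightarrow> \<bar>optval u g x0 z\<bar> \<noteq> \<infinity>"
    using finite_val by blast
  have "optval u g x0 0 \<noteq> \<infinity>"
    using finite_near_0[of 0] \<open>e > 0\<close> by auto
  then have "Dfun (u i) g (x0 i) 0 = 0" for i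
    by (intro Dfun_zero[OF mono] endowment_utility_neq_MInfty)
  then have supergradient_iff:
    "p \<in> superdiff (Dfun (u i) g (x0 i)) 0 \<longleftrightarrow> (\<forall>y. Dfun (u i) g (x0 i) y \<le> ereal (p \<bullet> y))" for p i
    by (simp add: superdiff_def)
  have "double_auction_eq u g x0 \<longleftrightarrow> (\<exists>p. \<forall>i y. Dfun (u i) g (x0 i) y \<le> ereal (p \<bullet> y))"
    using finite_near_0 by (intro double_auction_eq_iff_common_bound[OF concave no_pinf \<open>e > 0\<close>]) simp
  moreover have "(\<exists>p. \<forall>i y. Dfun (u i) g (x0 i) y \<le> ereal (p \<bullet> y))
      \<longleftrightarrow> (\<exists>p. g \<bullet> p = 1 \<and> (\<forall>i w. u i (x0 i) \<le> u i w \<longrightarrow> p \<bullet> x0 i \<le> p \<bullet> w))"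
    using Dfun_le_inner_iff by blast
  ultimately show ?thesis
    by (simp add: supergradient_iff)
qed

end
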